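(* Let $0\leq\epsilon<\frac{\pi}{4}$ and let $Q_\epsilon$ be the hyperbolic quadrilateral with all four sides of equal length and consecutive interior angles $\frac{\pi}{4}-\epsilon,\ \frac{\pi}{4}+\epsilon,\ \frac{\pi}{4}-\epsilon,\ \frac{\pi}{4}+\epsilon$. Then for each pair of opposite sides of $Q_\epsilon$, the common perpendicular between them passes through the intersection point of the two diagonals of $Q_\epsilon$, and both common perpendiculars have the same length $d$, where $\cosh d=\sqrt{2}\cos\epsilon+1$.
   Context: Work in the hyperbolic plane $\mathbb{H}^2$ (curvature $-1$). Such a quadrilateral $Q_\epsilon$ exists and is unique up to isometry. *)

theory Defs
  imports "HOL-Analysis.Analysis"
begin

text \<open>Hyperboloid model of the hyperbolic plane (curvature -1) in R^(1,2).
  A point is a triple (x0, x1, x2); Minkowski form -x0 y0 + x1 y1 + x2 y2.\<close>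

type_synonym pt = "real \<times> real \<times> real"

definition mink :: "pt \<Rightarrow> pt \<Rightarrow> real" where
  "mink x y = - fst x * fst y + fst (snd x) * fst (snd y) + snd (snd x) * snd (snd y)"

definition hplane :: "pt set" where
  "hplane = {x. mink x x = -1 \<and> fst x > 0}"

definition hdist :: "pt \<Rightarrow> pt \<Rightarrow> real" where
  "hdist x y = arcosh (- mink x y)"

definition hline :: "pt \<Rightarrow> pt \<Rightarrow> pt set" where
  "hline A B = {X \<in> hplane. \<exists>a b. X = a *\<^sub>R A + b *\<^sub>R B}"

definition hseg :: "pt \<Rightarrow> pt \<Rightarrow> pt set" where
  "hseg A B = {X \<in> hplane. \<exists>a b. a \<ge> 0 \<and> b \<ge> 0 \<and> X = a *\<^sub>R A + b *\<^sub>R B}"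

text \<open>Initial tangent vector at p of the geodesic from p to q (projection of q
  to the tangent space at p).\<close>
definition tangent :: "pt \<Rightarrow> pt \<Rightarrow> pt" where
  "tangent p q = q + mink p q *\<^sub>R p"

definition hangle :: "pt \<Rightarrow> pt \<Rightarrow> pt \<Rightarrow> real" where
  "hangle p q r = arccos (mink (tangent p q) (tangent p r) /
      (sqrt (mink (tangent p q) (tangent p q)) * sqrt (mink (tangent p r) (tangent p r))))"

definition noncollinear :: "pt \<Rightarrow> pt \<Rightarrow> pt \<Rightarrow> bool" where
  "noncollinear P Q R \<longleftrightarrow> P \<in> hplane \<and> Q \<in> hplane \<and> R \<in> hplane \<and> P \<noteq> Q \<and> R \<notin> hline P Q"

definition convex_quad :: "pt \<Rightarrow> pt \<Rightarrow> pt \<Rightarrow> pt \<Rightarrow> bool" where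
  "convex_quad A B C D \<longleftrightarrow>
     noncollinear A B C \<and> noncollinear B C D \<and> noncollinear C D A \<and> noncollinear D A B \<and>
     hseg A C \<inter> hseg B D \<noteq> {}"

definition perp_at :: "pt \<Rightarrow> pt \<Rightarrow> pt \<Rightarrow> pt \<Rightarrow> bool" where
  "perp_at P Q A B \<longleftrightarrow> P \<in> hline A B \<and>
     (\<forall>X \<in> hline A B. mink (tangent P Q) (tangent P X) = 0)"

definition common_perp :: "pt \<Rightarrow> pt \<Rightarrow> pt \<Rightarrow> pt \<Rightarrow> pt \<Rightarrow> pt \<Rightarrow> bool" where
  "common_perp A B C D P Q \<longleftrightarrow> Q \<in> hplane \<and> P \<noteq> Q \<and> perp_at P Q A B \<and> perp_at Q P C D"

end

theory Submission
  imports Defs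
begin

text \<open>Equal sides make \<open>B\<close> and \<open>D\<close> equidistant from \<open>A\<close> and \<open>C\<close> (and vice versa), so
  the diagonals bisect each other at \<open>M\<close>, the half-turn \<open>\<rho>\<close> about \<open>M\<close> maps \<open>A, B\<close> to
  \<open>C, D\<close>, and \<open>cosh AB = cosh AM cosh BM\<close>.  In the hyperboloid model a common
  perpendicular \<open>PQ\<close> of the lines \<open>AB\<close> and \<open>CD\<close>, with normals \<open>N\<close> and \<open>\<rho> N\<close>, has
  \<open>Q + \<langle>P,Q\<rangle> P \<parallel> N\<close> and \<open>P + \<langle>P,Q\<rangle> Q \<parallel> \<rho> N\<close>.  Hence the plane of \<open>P\<close> and \<open>Q\<close>
  contains \<open>N + \<rho> N\<close>, a multiple of \<open>M\<close>, and
  \<open>cosh PQ = |\<langle>N, \<rho> N\<rangle>| / \<langle>N, N\<rangle> = 1 + 2 (a\<^sup>2 - 1)(b\<^sup>2 - 1) / (a\<^sup>2 b\<^sup>2 - 1)\<close>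
  with \<open>a = cosh AM\<close>, \<open>b = cosh BM\<close>.  The same quantity is \<open>1 + cos A + cos B\<close>, and
  \<open>cos (\<pi>/4 - \<epsilon>) + cos (\<pi>/4 + \<epsilon>) = \<surd>2 cos \<epsilon>\<close>.  The other pair of opposite sides is
  the same configuration with the roles of \<open>a\<close> and \<open>b\<close> exchanged.\<close>

lemma mink_commute: "mink x y = mink y x"
  unfolding mink_def by (simp add: algebra_simps)

lemma mink_add_left [simp]: "mink (x + y) z = mink x z + mink y z"
  and mink_add_right [simp]: "mink z (x + y) = mink z x + mink z y"
  and mink_diff_left [simp]: "mink (x - y) z = mink x z - mink y z"
  and mink_diff_right [simp]: "mink z (x - y) = mink z x - mink z y"
  and mink_scaleR_left [simp]: "mink (c *\<^sub>R x) z = c * mink x z"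
  and mink_scaleR_right [simp]: "mink z (c *\<^sub>R x) = c * mink z x"
  and mink_minus_left [simp]: "mink (- x) z = - mink x z"
  and mink_minus_right [simp]: "mink z (- x) = - mink z x"
  unfolding mink_def by (simp_all add: algebra_simps)

lemma mink_self_hplane: "X \<in> hplane \<Longrightarrow> mink X X = -1"
  by (simp add: hplane_def)

lemma hplane_lagrange_identity:
  assumes "(x0, x1, x2) \<in> hplane" "(y0, y1, y2) \<in> hplane"
  shows "(x0 * y0)\<^sup>2 = (1 + x1 * y1 + x2 * y2)\<^sup>2 + (x1 - y1)\<^sup>2 + (x2 - y2)\<^sup>2 + (x1 * y2 - x2 * y1)\<^sup>2"
proof -
  have "x0\<^sup>2 = 1 + x1\<^sup>2 + x2\<^sup>2" "y0\<^sup>2 = 1 + y1\<^sup>2 + y2\<^sup>2"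
    using assms by (auto simp: hplane_def mink_def power2_eq_square)
  then show ?thesis
    by (simp add: power_mult_distrib) (simp add: power2_eq_square algebra_simps)
qed

lemma mink_hplane_le:
  assumes "X \<in> hplane" "Y \<in> hplane"
  shows "mink X Y \<le> -1"
proof -
  obtain x0 x1 x2 y0 y1 y2 where X: "X = (x0, x1, x2)" and Y: "Y = (y0, y1, y2)"
    by (metis prod.exhaust)
  have "(1 + x1 * y1 + x2 * y2)\<^sup>2 \<le> (x0 * y0)\<^sup>2"
    using hplane_lagrange_identity assms unfolding X Y by fastforce
  moreover have "x0 * y0 \<ge> 0"
    using assms unfolding X Y hplane_def by simp
  ultimately have "1 + x1 * y1 + x2 * y2 \<le> x0 * y0"
    by (rule power2_le_imp_le)
  then show ?thesis
    unfolding X Y mink_def by simp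
qed

lemma mink_hplane_eq_iff:
  assumes "X \<in> hplane" "Y \<in> hplane"
  shows "mink X Y = -1 \<longleftrightarrow> X = Y"
proof
  assume XY: "mink X Y = -1"
  obtain x0 x1 x2 y0 y1 y2 where X: "X = (x0, x1, x2)" and Y: "Y = (y0, y1, y2)"
    by (metis prod.exhaust)
  have "x0 * y0 = 1 + x1 * y1 + x2 * y2"
    using XY unfolding X Y mink_def by simp
  then have "(x1 - y1)\<^sup>2 + (x2 - y2)\<^sup>2 + (x1 * y2 - x2 * y1)\<^sup>2 = 0"
    using hplane_lagrange_identity assms unfolding X Y by fastforce
  then have "(x1 - y1)\<^sup>2 = 0" "(x2 - y2)\<^sup>2 = 0"
    using zero_le_power2[of "x1 - y1"] zero_le_power2[of "x2 - y2"]
      zero_le_power2[of "x1 * y2 - x2 * y1"] by linarith+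
  then have "x1 = y1" "x2 = y2"
    by simp_all
  have "x0\<^sup>2 = 1 + x1\<^sup>2 + x2\<^sup>2" "y0\<^sup>2 = 1 + y1\<^sup>2 + y2\<^sup>2" "x0 > 0" "y0 > 0"
    using assms unfolding X Y hplane_def mink_def by (auto simp: power2_eq_square)
  then have "x0 = y0"
    using \<open>x1 = y1\<close> \<open>x2 = y2\<close> by (metis power2_eq_iff_nonneg less_imp_le)
  then show "X = Y"
    unfolding X Y using \<open>x1 = y1\<close> \<open>x2 = y2\<close> by simp
next
  show "X = Y \<Longrightarrow> mink X Y = -1"
    using assms mink_self_hplane by simp
qed

lemma mink_hplane_less:
  assumes "X \<in> hplane" "Y \<in> hplane" "X \<noteq> Y"
  shows "mink X Y < -1"
  using mink_hplane_le[OF assms(1,2)] mink_hplane_eq_iff[OF assms(1,2)] assms(3) by linarith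

lemma cosh_hdist: "X \<in> hplane \<Longrightarrow> Y \<in> hplane \<Longrightarrow> cosh (hdist X Y) = - mink X Y"
  unfolding hdist_def using mink_hplane_le[of X Y] by simp

lemma scaleR_hplane_eq:
  assumes "X \<in> hplane" "c *\<^sub>R X \<in> hplane"
  shows "c = 1"
proof -
  have "c\<^sup>2 = 1"
    using assms by (simp add: hplane_def power2_eq_square)
  moreover have "c > 0"
    using assms by (auto simp: hplane_def zero_less_mult_iff)
  ultimately show ?thesis
    by (simp add: power2_eq_1_iff)
qed

lemma hplane_if_mink_neg:
  assumes "mink X X = -1" "M \<in> hplane" "mink X M < 0"
  shows "X \<in> hplane"
proof (rule ccontr)
  assume "X \<notin> hplane"
  then have "fst X \<le> 0"
    using assms(1) unfolding hplane_def by simp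
  moreover have "fst X \<noteq> 0"
  proof
    assume "fst X = 0"
    then have "0 \<le> mink X X"
      unfolding mink_def by (simp add: add_nonneg_nonneg)
    with assms(1) show False
      by simp
  qed
  ultimately have "- X \<in> hplane"
    using assms(1) unfolding hplane_def by simp
  then show False
    using mink_hplane_le[OF _ assms(2), of "- X"] assms(3) by simp
qed

lemma mink_tangent_base: "P \<in> hplane \<Longrightarrow> mink P (tangent P Q) = 0"
  unfolding tangent_def using mink_self_hplane by (simp add: mink_commute)

lemma mink_tangent_tangent:
  "P \<in> hplane \<Longrightarrow> mink (tangent P X) (tangent P Y) = mink X Y + mink P X * mink P Y"
  unfolding tangent_def using mink_self_hplane
  by (simp add: mink_commute[of X P] mink_commute[of Y P] algebra_simps)

lemma tangent_neq_zero:
  assumes "P \<in> hplane" "Q \<in> hplane" "P \<noteq> Q"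
  shows "tangent P Q \<noteq> 0"
proof
  assume "tangent P Q = 0"
  then have "Q = (- mink P Q) *\<^sub>R P"
    unfolding tangent_def by (simp add: add_eq_0_iff)
  then have "Q = P"
    using scaleR_hplane_eq[OF assms(1), of "- mink P Q"] assms(2) by simp
  with assms(3) show False
    by simp
qed

lemma tangent_eq_if_in_span:
  assumes "P \<in> hplane" "mink P N = 0" "Q = x *\<^sub>R P + y *\<^sub>R N"
  shows "tangent P Q = y *\<^sub>R N"
  using assms mink_self_hplane[OF assms(1)] unfolding tangent_def by simp

lemma left_in_hline:
  assumes "A \<in> hplane"
  shows "A \<in> hline A B"
proof -
  have "A = 1 *\<^sub>R A + 0 *\<^sub>R B"
    by simp
  then show ?thesis
    using assms unfolding hline_def by blast
qed

lemma right_in_hline: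
  assumes "B \<in> hplane"
  shows "B \<in> hline A B"
proof -
  have "B = 0 *\<^sub>R A + 1 *\<^sub>R B"
    by simp
  then show ?thesis
    using assms unfolding hline_def by blast
qed

lemma mink_tangent_project:
  "P \<in> hplane \<Longrightarrow> mink (tangent P Q) (tangent P X) = mink (tangent P Q) X"
  using mink_tangent_base[of P Q] unfolding tangent_def[of P X] by (simp add: mink_commute)

lemma perp_at_iff:
  assumes "A \<in> hplane" "B \<in> hplane"
  shows "perp_at P Q A B \<longleftrightarrow>
    P \<in> hline A B \<and> mink (tangent P Q) A = 0 \<and> mink (tangent P Q) B = 0"
proof -
  have AB: "A \<in> hline A B" "B \<in> hline A B"
    using assms by (simp_all add: left_in_hline right_in_hline)
  show ?thesis
  proof (cases "P \<in> hline A B")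
    case True
    then have "P \<in> hplane"
      unfolding hline_def by blast
    then have "perp_at P Q A B \<longleftrightarrow> (\<forall>X \<in> hline A B. mink (tangent P Q) X = 0)"
      using True by (simp add: perp_at_def mink_tangent_project)
    also have "\<dots> \<longleftrightarrow> mink (tangent P Q) A = 0 \<and> mink (tangent P Q) B = 0"
    proof (intro iffI conjI ballI)
      fix X
      assume "mink (tangent P Q) A = 0 \<and> mink (tangent P Q) B = 0" "X \<in> hline A B"
      then show "mink (tangent P Q) X = 0"
        unfolding hline_def by auto
    qed (use AB in auto)
    finally show ?thesis
      using True by simp
  qed (simp add: perp_at_def)
qed

text \<open>Lines with normals \<open>N1\<close>, \<open>N2\<close> and a common perpendicular \<open>PQ\<close>:
  eliminating \<open>Q\<close> from \<open>Q + t P \<in> span {N1}\<close> and \<open>P + t Q \<in> span {N2}\<close> gives the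
  classical formula \<open>cosh d = |\<langle>N1, N2\<rangle>| / (|N1| |N2|)\<close>.\<close>

lemma mink_common_perp_normals:
  assumes P: "P \<in> hplane" and Q: "Q \<in> hplane" and "P \<noteq> Q"
    and tPQ: "tangent P Q = w *\<^sub>R N1" and tQP: "tangent Q P = u *\<^sub>R N2"
  shows "(mink P Q)\<^sup>2 * mink N1 N1 * mink N2 N2 = (mink N1 N2)\<^sup>2"
proof -
  define t where "t = mink P Q"
  have "w \<noteq> 0" "u \<noteq> 0"
    using tangent_neq_zero assms by fastforce+
  have Q_eq: "Q = w *\<^sub>R N1 - t *\<^sub>R P" and P_eq: "P = u *\<^sub>R N2 - t *\<^sub>R Q"
    using tPQ tQP unfolding tangent_def t_def by (auto simp: mink_commute[of Q P] algebra_simps)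
  have "mink P N1 = 0" "mink Q N2 = 0"
    using mink_tangent_base[OF P, of Q] mink_tangent_base[OF Q, of P] tPQ tQP \<open>w \<noteq> 0\<close> \<open>u \<noteq> 0\<close>
    by auto
  have "mink Q N1 = w * mink N1 N1"
    by (subst Q_eq) (simp add: \<open>mink P N1 = 0\<close>)
  moreover have "mink P N2 = u * mink N2 N2"
    by (subst P_eq) (simp add: \<open>mink Q N2 = 0\<close>)
  moreover have "mink P N1 = u * mink N1 N2 - t * mink Q N1"
    by (subst P_eq) (simp add: mink_commute)
  moreover have "mink Q N2 = w * mink N1 N2 - t * mink P N2"
    by (subst Q_eq) simp
  ultimately have u_eq: "u * mink N1 N2 = t * w * mink N1 N1"
    and w_eq: "w * mink N1 N2 = t * u * mink N2 N2"
    using \<open>mink P N1 = 0\<close> \<open>mink Q N2 = 0\<close> by simp_all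
  have "u * (mink N1 N2)\<^sup>2 = t * mink N1 N1 * (w * mink N1 N2)"
    using u_eq by (simp add: power2_eq_square algebra_simps)
  also have "\<dots> = u * (t\<^sup>2 * mink N1 N1 * mink N2 N2)"
    using w_eq by (simp add: power2_eq_square algebra_simps)
  finally show ?thesis
    using \<open>u \<noteq> 0\<close> unfolding t_def by simp
qed

lemma hline_if_in_span_normals:
  assumes P: "P \<in> hplane" and Q: "Q \<in> hplane" and "P \<noteq> Q"
    and tPQ: "tangent P Q = w *\<^sub>R N1" and tQP: "tangent Q P = u *\<^sub>R N2"
    and X: "X \<in> hplane" "X = c1 *\<^sub>R N1 + c2 *\<^sub>R N2"
  shows "X \<in> hline P Q"
proof -
  have "w \<noteq> 0" "u \<noteq> 0"
    using tangent_neq_zero assms by fastforce+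
  then have "N1 = (1 / w) *\<^sub>R (Q + mink P Q *\<^sub>R P)" "N2 = (1 / u) *\<^sub>R (P + mink Q P *\<^sub>R Q)"
    using tPQ tQP unfolding tangent_def by simp_all
  then have "X = (c1 / w * mink P Q + c2 / u) *\<^sub>R P + (c1 / w + c2 / u * mink Q P) *\<^sub>R Q"
    using X(2) by (simp add: algebra_simps)
  then show ?thesis
    using X(1) unfolding hline_def by blast
qed

definition point_reflection :: "pt \<Rightarrow> pt \<Rightarrow> pt" where
  "point_reflection M X = - X - (2 * mink X M) *\<^sub>R M"

lemma point_reflection_add [simp]:
    "point_reflection M (X + Y) = point_reflection M X + point_reflection M Y"
  and point_reflection_scaleR [simp]:
    "point_reflection M (c *\<^sub>R X) = c *\<^sub>R point_reflection M X"
  unfolding point_reflection_def by (simp_all add: algebra_simps)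

context
  fixes M :: pt
  assumes M: "M \<in> hplane"
begin

lemma mink_point_reflection [simp]:
  "mink (point_reflection M X) (point_reflection M Y) = mink X Y"
  unfolding point_reflection_def using mink_self_hplane[OF M]
  by (simp add: mink_commute[of M X] mink_commute[of M Y] algebra_simps)

lemma point_reflection_center [simp]: "point_reflection M M = M"
  unfolding point_reflection_def using mink_self_hplane[OF M] by (simp add: scaleR_2)

lemma point_reflection_involutive [simp]: "point_reflection M (point_reflection M X) = X"
  unfolding point_reflection_def using mink_self_hplane[OF M] by (simp add: algebra_simps)

lemma mink_point_reflection_center [simp]: "mink (point_reflection M X) M = mink X M"
  using mink_point_reflection[of X M] by simp

lemma point_reflection_hplane:
  assumes "X \<in> hplane"
  shows "point_reflection M X \<in> hplane"
proof (rule hplane_if_mink_neg[OF _ M])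
  show "mink (point_reflection M X) (point_reflection M X) = -1"
    using mink_self_hplane[OF assms] by simp
  show "mink (point_reflection M X) M < 0"
    using mink_hplane_le[OF assms M] by simp
qed

lemma point_reflection_hline:
  assumes "X \<in> hline P Q"
  shows "point_reflection M X \<in> hline (point_reflection M P) (point_reflection M Q)"
proof -
  obtain x y where "X \<in> hplane" "X = x *\<^sub>R P + y *\<^sub>R Q"
    using assms unfolding hline_def by blast
  moreover have "point_reflection M X = x *\<^sub>R point_reflection M P + y *\<^sub>R point_reflection M Q"
    using \<open>X = x *\<^sub>R P + y *\<^sub>R Q\<close> by simp
  ultimately show ?thesis
    unfolding hline_def using point_reflection_hplane by blast
qed

lemma tangent_point_reflection:
  "tangent (point_reflection M P) (point_reflection M Q) = point_reflection M (tangent P Q)"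
  unfolding tangent_def by simp

lemma perp_at_point_reflection:
  assumes "A \<in> hplane" "B \<in> hplane" "perp_at P Q A B"
  shows "perp_at (point_reflection M P) (point_reflection M Q) (point_reflection M A) (point_reflection M B)"
  using assms point_reflection_hline
  by (simp add: perp_at_iff point_reflection_hplane tangent_point_reflection)

lemma point_reflection_eq_if_equidistant:
  assumes A: "A \<in> hplane" and C: "C \<in> hplane" and "A \<noteq> C"
    and M_eq: "M = s *\<^sub>R A + s' *\<^sub>R C" and equi: "mink M A = mink M C"
  shows "C = point_reflection M A"
proof -
  define p where "p = mink A C"
  have "p < -1"
    unfolding p_def using mink_hplane_less assms by blast
  have "(s' - s) * (1 + p) = 0"
    using equi unfolding M_eq p_def
    by (simp add: mink_self_hplane[OF A] mink_self_hplane[OF C] mink_commute[of C A] algebra_simps)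
  then have "s' = s"
    using \<open>p < -1\<close> by simp
  then have M_sum: "M = s *\<^sub>R (A + C)"
    using M_eq by (simp add: scaleR_add_right)
  have mink_AM: "mink A M = s * (p - 1)"
    unfolding M_sum p_def by (simp add: mink_self_hplane[OF A] algebra_simps)
  have "2 * mink A M * s = s\<^sup>2 * (2 * p - 2)"
    unfolding mink_AM by (simp add: power2_eq_square algebra_simps)
  also have "\<dots> = -1"
    using mink_self_hplane[OF M] unfolding M_sum p_def
    by (simp add: mink_self_hplane[OF A] mink_self_hplane[OF C] mink_commute[of C A]
        power2_eq_square algebra_simps)
  finally have "2 * mink A M * s = -1" .
  then have "(2 * mink A M) *\<^sub>R M = - (A + C)"
    unfolding M_sum by (simp add: mult.commute)
  then show ?thesis
    unfolding point_reflection_def by (simp add: algebra_simps)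
qed

end

text \<open>\<open>a = cosh AM\<close> and \<open>b = cosh BM\<close>; the value of \<open>mink A B\<close> says that the
  diagonals are orthogonal.\<close>

locale rhombus =
  fixes A B C D M :: pt and a b :: real
  assumes A_in: "A \<in> hplane" and B_in: "B \<in> hplane" and M_in: "M \<in> hplane"
    and mink_AM: "mink A M = - a" and mink_BM: "mink B M = - b"
    and mink_AB: "mink A B = - (a * b)"
    and a_gt_1: "1 < a" and b_gt_1: "1 < b"
    and C_eq: "C = point_reflection M A" and D_eq: "D = point_reflection M B"
begin

lemma mink_vertices [simp]:
  "mink A A = -1" "mink B B = -1" "mink M M = -1"
  "mink A B = - (a * b)" "mink B A = - (a * b)"
  "mink A M = - a" "mink M A = - a" "mink B M = - b" "mink M B = - b"
  using mink_self_hplane A_in B_in M_in mink_AB mink_AM mink_BM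
  by (simp_all add: mink_commute[of B A] mink_commute[of M A] mink_commute[of M B])

lemma C_expand: "C = (2 * a) *\<^sub>R M - A" and D_expand: "D = (2 * b) *\<^sub>R M - B"
  unfolding C_eq D_eq point_reflection_def by simp_all

lemma C_in: "C \<in> hplane" and D_in: "D \<in> hplane"
  unfolding C_eq D_eq using point_reflection_hplane M_in A_in B_in by blast+

lemma squares_gt_1: "1 < a\<^sup>2" "1 < b\<^sup>2" "1 < (a * b)\<^sup>2"
proof -
  have "1 < a * b"
    using a_gt_1 b_gt_1 less_1_mult by blast
  then show "1 < a\<^sup>2" "1 < b\<^sup>2" "1 < (a * b)\<^sup>2"
    using a_gt_1 b_gt_1 by (simp_all add: one_less_power)
qed

definition normal_AB :: pt where
  "normal_AB = (a * (b\<^sup>2 - 1)) *\<^sub>R A + (b * (a\<^sup>2 - 1)) *\<^sub>R B + (1 - (a * b)\<^sup>2) *\<^sub>R M"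

lemma mink_normal_AB [simp]:
  "mink normal_AB A = 0" "mink normal_AB B = 0" "mink normal_AB M = - ((a\<^sup>2 - 1) * (b\<^sup>2 - 1))"
  unfolding normal_AB_def by (simp_all add: power2_eq_square algebra_simps)

lemma mink_normal_AB_self: "mink normal_AB normal_AB = (a\<^sup>2 - 1) * (b\<^sup>2 - 1) * ((a * b)\<^sup>2 - 1)"
  by (subst (2) normal_AB_def) (simp add: power2_eq_square algebra_simps)

lemma orthogonal_AB_eq_normal_AB:
  assumes "mink (x *\<^sub>R A + y *\<^sub>R B + z *\<^sub>R M) A = 0" "mink (x *\<^sub>R A + y *\<^sub>R B + z *\<^sub>R M) B = 0"
  shows "x *\<^sub>R A + y *\<^sub>R B + z *\<^sub>R M = (z / (1 - (a * b)\<^sup>2)) *\<^sub>R normal_AB"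
proof -
  define d where "d = 1 - (a * b)\<^sup>2"
  have "d \<noteq> 0"
    unfolding d_def using squares_gt_1 by simp
  have e1: "x + a * b * y + a * z = 0" and e2: "a * b * x + y + b * z = 0"
    using assms by (simp_all add: algebra_simps)
  have "x * d = z * (a * (b\<^sup>2 - 1))" "y * d = z * (b * (a\<^sup>2 - 1))"
    unfolding d_def using e1 e2 by algebra+
  then have "x = z / d * (a * (b\<^sup>2 - 1))" "y = z / d * (b * (a\<^sup>2 - 1))" "z = z / d * d"
    using \<open>d \<noteq> 0\<close> by (simp_all add: field_simps)
  then show ?thesis
    unfolding normal_AB_def d_def[symmetric] by (simp add: scaleR_add_right)
qed

lemma tangent_parallel_normal_AB:
  assumes "perp_at P Q A B" "Q \<in> hline C D"
  obtains w where "tangent P Q = w *\<^sub>R normal_AB"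
proof -
  obtain p q where P: "P = p *\<^sub>R A + q *\<^sub>R B"
    using assms(1) unfolding perp_at_def hline_def by blast
  obtain r s where Q: "Q = r *\<^sub>R C + s *\<^sub>R D"
    using assms(2) unfolding hline_def by blast
  define t where "t = mink P Q"
  have "tangent P Q = Q + t *\<^sub>R P"
    unfolding tangent_def t_def ..
  also have "\<dots> = (t * p - r) *\<^sub>R A + (t * q - s) *\<^sub>R B + (2 * a * r + 2 * b * s) *\<^sub>R M"
    unfolding P Q C_expand D_expand by (simp add: algebra_simps)
  finally have tPQ: "tangent P Q = \<dots>" .
  have "mink (tangent P Q) A = 0" "mink (tangent P Q) B = 0"
    using assms(1) perp_at_iff[OF A_in B_in] by blast+
  then show ?thesis
    using that orthogonal_AB_eq_normal_AB unfolding tPQ by metis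
qed

lemma common_perp_tangents:
  assumes "common_perp A B C D P Q"
  obtains w u where "tangent P Q = w *\<^sub>R normal_AB"
    and "tangent Q P = u *\<^sub>R point_reflection M normal_AB"
proof -
  let ?\<rho> = "point_reflection M"
  have perp_PQ: "perp_at P Q A B" and perp_QP: "perp_at Q P C D"
    using assms unfolding common_perp_def by auto
  obtain w where "tangent P Q = w *\<^sub>R normal_AB"
    using tangent_parallel_normal_AB perp_PQ perp_QP unfolding perp_at_def by blast
  moreover have "perp_at (?\<rho> Q) (?\<rho> P) A B"
    using perp_at_point_reflection[OF M_in C_in D_in perp_QP] M_in unfolding C_eq D_eq by simp
  moreover have "?\<rho> P \<in> hline C D"
    using point_reflection_hline[OF M_in] perp_PQ unfolding C_eq D_eq perp_at_def by blast
  ultimately obtain u where "tangent (?\<rho> Q) (?\<rho> P) = u *\<^sub>R normal_AB"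
    using tangent_parallel_normal_AB by metis
  then have "tangent Q P = u *\<^sub>R ?\<rho> normal_AB"
    using tangent_point_reflection[OF M_in, of "?\<rho> Q" "?\<rho> P"] M_in by simp
  with \<open>tangent P Q = w *\<^sub>R normal_AB\<close> show ?thesis
    by (rule that)
qed

lemma common_perp_through_center:
  assumes "common_perp A B C D P Q"
  shows "M \<in> hline P Q"
proof -
  have P_in: "P \<in> hplane" and Q_in: "Q \<in> hplane" and "P \<noteq> Q"
    using assms unfolding common_perp_def perp_at_def hline_def by auto
  obtain w u where tPQ: "tangent P Q = w *\<^sub>R normal_AB"
    and tQP: "tangent Q P = u *\<^sub>R point_reflection M normal_AB"
    using common_perp_tangents[OF assms] .
  define c where "c = 1 / (2 * (a\<^sup>2 - 1) * (b\<^sup>2 - 1))"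
  have "normal_AB + point_reflection M normal_AB = (1 / c) *\<^sub>R M"
    unfolding point_reflection_def c_def by simp
  then have "M = c *\<^sub>R normal_AB + c *\<^sub>R point_reflection M normal_AB"
    using squares_gt_1 unfolding c_def by (simp add: scaleR_add_right[symmetric])
  then show ?thesis
    using hline_if_in_span_normals[OF P_in Q_in \<open>P \<noteq> Q\<close> tPQ tQP] M_in by blast
qed

lemma cosh_common_perp:
  assumes "common_perp A B C D P Q"
  shows "cosh (hdist P Q) = 1 + 2 * ((a\<^sup>2 - 1) * (b\<^sup>2 - 1) / ((a * b)\<^sup>2 - 1))"
proof -
  have P_in: "P \<in> hplane" and Q_in: "Q \<in> hplane" and "P \<noteq> Q"
    using assms unfolding common_perp_def perp_at_def hline_def by auto
  obtain w u where tPQ: "tangent P Q = w *\<^sub>R normal_AB"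
    and tQP: "tangent Q P = u *\<^sub>R point_reflection M normal_AB"
    using common_perp_tangents[OF assms] .
  define m where "m = mink normal_AB M"
  define n where "n = mink normal_AB normal_AB"
  have "n > 0"
    unfolding n_def mink_normal_AB_self using squares_gt_1 by simp
  have "mink normal_AB (point_reflection M normal_AB) = - n - 2 * m\<^sup>2"
    unfolding point_reflection_def m_def n_def by (simp add: power2_eq_square)
  then have "(mink P Q)\<^sup>2 * n * n = (- n - 2 * m\<^sup>2)\<^sup>2"
    using mink_common_perp_normals[OF P_in Q_in \<open>P \<noteq> Q\<close> tPQ tQP] M_in unfolding n_def by simp
  then have "mink P Q * n = n + 2 * m\<^sup>2 \<or> mink P Q * n = - (n + 2 * m\<^sup>2)"
    unfolding power2_eq_iff[symmetric] by (simp add: power2_eq_square algebra_simps)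
  moreover have "mink P Q * n < 0"
    using mink_hplane_le[OF P_in Q_in] \<open>n > 0\<close> by (simp add: mult_neg_pos)
  moreover have "0 \<le> m\<^sup>2"
    by simp
  ultimately have "- mink P Q * n = n + 2 * m\<^sup>2"
    using \<open>n > 0\<close> by linarith
  then have "- mink P Q = 1 + 2 * (m\<^sup>2 / n)"
    using \<open>n > 0\<close> by (simp add: field_simps)
  also have "m\<^sup>2 / n = (a\<^sup>2 - 1) * (b\<^sup>2 - 1) / ((a * b)\<^sup>2 - 1)"
    unfolding m_def n_def mink_normal_AB_self using squares_gt_1 by (simp add: power2_eq_square)
  finally show ?thesis
    using cosh_hdist[OF P_in Q_in] by simp
qed

text \<open>A point of \<open>AB\<close> in the plane of \<open>M\<close> and \<open>normal_AB\<close> is the foot of the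
  perpendicular from \<open>M\<close> to \<open>AB\<close>.\<close>

lemma common_perp_of_foot:
  assumes P_line: "P \<in> hline A B" and P_span: "P = x *\<^sub>R M + y *\<^sub>R normal_AB"
  shows "common_perp A B C D P (point_reflection M P)"
proof -
  let ?\<rho> = "point_reflection M"
  have P_in: "P \<in> hplane"
    using P_line unfolding hline_def by blast
  have "mink P normal_AB = 0"
    using P_line unfolding hline_def by (auto simp: mink_commute[of _ normal_AB])
  have "x \<noteq> 0"
  proof
    assume "x = 0"
    then have "mink P P = y\<^sup>2 * mink normal_AB normal_AB"
      unfolding P_span by (simp add: power2_eq_square)
    moreover have "0 \<le> y\<^sup>2 * mink normal_AB normal_AB"
      unfolding mink_normal_AB_self using squares_gt_1 by simp
    ultimately show False
      using mink_self_hplane[OF P_in] by simp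
  qed
  then have "M = (1 / x) *\<^sub>R P - (y / x) *\<^sub>R normal_AB"
    unfolding P_span by (simp add: algebra_simps)
  then have "?\<rho> P = (- 1 - 2 * mink P M / x) *\<^sub>R P + (2 * mink P M * y / x) *\<^sub>R normal_AB"
    unfolding point_reflection_def by (subst (2) \<open>M = _\<close>) (simp add: algebra_simps)
  then have "tangent P (?\<rho> P) = (2 * mink P M * y / x) *\<^sub>R normal_AB"
    by (rule tangent_eq_if_in_span[OF P_in \<open>mink P normal_AB = 0\<close>])
  then have perp_PQ: "perp_at P (?\<rho> P) A B"
    using P_line unfolding perp_at_iff[OF A_in B_in] by simp
  moreover have "perp_at (?\<rho> P) P C D"
    using perp_at_point_reflection[OF M_in A_in B_in perp_PQ] M_in unfolding C_eq D_eq by simp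
  moreover have "mink (?\<rho> P) normal_AB \<noteq> 0"
    using mink_hplane_le[OF P_in M_in] squares_gt_1 \<open>mink P normal_AB = 0\<close>
    unfolding point_reflection_def by (simp add: mink_commute[of M])
  then have "P \<noteq> ?\<rho> P"
    using \<open>mink P normal_AB = 0\<close> by auto
  ultimately show ?thesis
    unfolding common_perp_def using point_reflection_hplane[OF M_in P_in] by blast
qed

lemma common_perp_exists: "\<exists>P Q. common_perp A B C D P Q"
proof -
  define \<alpha> where "\<alpha> = a * (b\<^sup>2 - 1)"
  define \<beta> where "\<beta> = b * (a\<^sup>2 - 1)"
  define P0 where "P0 = \<alpha> *\<^sub>R A + \<beta> *\<^sub>R B"
  have "0 < \<alpha>" "0 < \<beta>"
    unfolding \<alpha>_def \<beta>_def using squares_gt_1 a_gt_1 b_gt_1 by simp_all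
  have "mink P0 P0 = - (\<alpha>\<^sup>2 + \<beta>\<^sup>2 + 2 * (\<alpha> * \<beta>) * (a * b))"
    unfolding P0_def by (simp add: power2_eq_square algebra_simps)
  moreover have "0 < 2 * (\<alpha> * \<beta>) * (a * b)"
    using \<open>0 < \<alpha>\<close> \<open>0 < \<beta>\<close> a_gt_1 b_gt_1 by simp
  moreover have "0 \<le> \<alpha>\<^sup>2" "0 \<le> \<beta>\<^sup>2"
    by simp_all
  ultimately have "mink P0 P0 < 0"
    by linarith
  define r where "r = sqrt (- mink P0 P0)"
  have "r > 0"
    unfolding r_def using \<open>mink P0 P0 < 0\<close> by simp
  define P where "P = (1 / r) *\<^sub>R P0"
  have "mink P M = - (\<alpha> * a + \<beta> * b) / r"
    unfolding P_def P0_def using \<open>r > 0\<close> by (simp add: field_simps)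
  moreover have "0 < \<alpha> * a + \<beta> * b"
    using \<open>0 < \<alpha>\<close> \<open>0 < \<beta>\<close> a_gt_1 b_gt_1 by (simp add: add_pos_pos)
  ultimately have "mink P M < 0"
    using \<open>r > 0\<close> by (simp add: divide_neg_pos)
  moreover have "mink P P = -1"
    unfolding P_def r_def using \<open>mink P0 P0 < 0\<close> by (simp add: power2_eq_square)
  ultimately have "P \<in> hline A B"
    using hplane_if_mink_neg M_in unfolding P_def P0_def hline_def by (auto simp: scaleR_add_right)
  moreover have "P0 = ((a * b)\<^sup>2 - 1) *\<^sub>R M + normal_AB"
    unfolding P0_def normal_AB_def \<alpha>_def \<beta>_def by (simp add: algebra_simps)
  then have "P = (((a * b)\<^sup>2 - 1) / r) *\<^sub>R M + (1 / r) *\<^sub>R normal_AB"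
    unfolding P_def by (simp add: scaleR_add_right)
  ultimately show ?thesis
    using common_perp_of_foot by blast
qed

lemma cos_hangle_A: "cos (hangle A D B) = ((a * b)\<^sup>2 - 2 * b\<^sup>2 + 1) / ((a * b)\<^sup>2 - 1)"
proof -
  have "mink A D = - (a * b)" "mink D D = -1" "mink D B = 1 - 2 * b\<^sup>2"
    unfolding D_expand by (simp_all add: power2_eq_square algebra_simps)
  then have "mink (tangent A D) (tangent A D) = (a * b)\<^sup>2 - 1"
    "mink (tangent A B) (tangent A B) = (a * b)\<^sup>2 - 1"
    "mink (tangent A D) (tangent A B) = (a * b)\<^sup>2 - 2 * b\<^sup>2 + 1"
    using mink_tangent_tangent[OF A_in] by (simp_all add: power2_eq_square)
  then have "hangle A D B = arccos (((a * b)\<^sup>2 - 2 * b\<^sup>2 + 1) / ((a * b)\<^sup>2 - 1))"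
    unfolding hangle_def using squares_gt_1 by simp
  moreover have "-1 \<le> ((a * b)\<^sup>2 - 2 * b\<^sup>2 + 1) / ((a * b)\<^sup>2 - 1)"
    "((a * b)\<^sup>2 - 2 * b\<^sup>2 + 1) / ((a * b)\<^sup>2 - 1) \<le> 1"
    using squares_gt_1 mult_right_mono[of 1 "a\<^sup>2" "b\<^sup>2"] by (simp_all add: field_simps power_mult_distrib)
  ultimately show ?thesis
    by simp
qed

lemma rhombus_rotate: "rhombus B C D A M b a"
proof
  show "mink C M = - a" "mink B C = - (b * a)"
    unfolding C_expand by (simp_all add: algebra_simps)
  show "A = point_reflection M C"
    unfolding C_eq using M_in by simp
qed (use B_in C_in M_in a_gt_1 b_gt_1 D_eq in simp_all)

end

lemma rhombus_if_equilateral: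
  assumes quad: "convex_quad A B C D"
    and sides: "hdist A B = hdist B C" "hdist B C = hdist C D" "hdist C D = hdist D A"
    and M_AC: "M \<in> hseg A C" and M_BD: "M \<in> hseg B D"
  shows "rhombus A B C D M (- mink A M) (- mink B M)"
proof -
  have A_in: "A \<in> hplane" and B_in: "B \<in> hplane" and C_in: "C \<in> hplane" and D_in: "D \<in> hplane"
    and "A \<notin> hline C D" and "B \<notin> hline D A"
    using quad unfolding convex_quad_def noncollinear_def by auto
  then have "A \<noteq> C" "B \<noteq> D"
    using left_in_hline by metis+
  obtain s s' where M_in: "M \<in> hplane" and M_AC_eq: "M = s *\<^sub>R A + s' *\<^sub>R C"
    using M_AC unfolding hseg_def by blast
  obtain u u' where M_BD_eq: "M = u *\<^sub>R B + u' *\<^sub>R D"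
    using M_BD unfolding hseg_def by blast
  have equal_sides: "mink A B = mink B C" "mink C D = mink B C" "mink D A = mink B C"
    using sides cosh_hdist[OF A_in B_in] cosh_hdist[OF B_in C_in] cosh_hdist[OF C_in D_in]
      cosh_hdist[OF D_in A_in] by simp_all
  have "mink M A = mink M C"
    using equal_sides unfolding M_BD_eq by (simp add: mink_commute)
  moreover have "mink M B = mink M D"
    using equal_sides unfolding M_AC_eq by (simp add: mink_commute)
  ultimately have C_eq: "C = point_reflection M A" and D_eq: "D = point_reflection M B"
    using point_reflection_eq_if_equidistant[OF M_in] A_in B_in C_in D_in \<open>A \<noteq> C\<close> \<open>B \<noteq> D\<close>
      M_AC_eq M_BD_eq by blast+
  text \<open>Equal sides \<open>AB = BC\<close> force the diagonals to be orthogonal (Pythagoras at \<open>M\<close>).\<close>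
  have "mink B C = - mink A B - 2 * mink A M * mink B M"
    unfolding C_eq point_reflection_def by (simp add: mink_commute)
  with equal_sides(1) have "mink A B = - ((- mink A M) * (- mink B M))"
    by simp
  moreover have "A \<noteq> M" "B \<noteq> M"
    using \<open>A \<noteq> C\<close> \<open>B \<noteq> D\<close> M_in unfolding C_eq D_eq by auto
  then have "1 < - mink A M" "1 < - mink B M"
    using mink_hplane_less[OF A_in M_in] mink_hplane_less[OF B_in M_in] by simp_all
  ultimately show ?thesis
    using A_in B_in M_in C_eq D_eq by unfold_locales simp_all
qed

lemma cos_quarter_pi_diff_add: "cos (pi / 4 - x) + cos (pi / 4 + x) = sqrt 2 * cos x"
  by (simp add: cos_diff cos_add cos_45)

theorem lemma3p2:
  fixes \<epsilon> :: real and A B C D M :: pt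
  assumes "0 \<le> \<epsilon>" and "\<epsilon> < pi / 4"
    and "convex_quad A B C D"
    and "hdist A B = hdist B C" and "hdist B C = hdist C D" and "hdist C D = hdist D A"
    and "hangle A D B = pi / 4 - \<epsilon>" and "hangle B A C = pi / 4 + \<epsilon>"
    and "hangle C B D = pi / 4 - \<epsilon>" and "hangle D C A = pi / 4 + \<epsilon>"
    and "M \<in> hseg A C" and "M \<in> hseg B D"
  shows "(\<exists>P Q. common_perp A B C D P Q) \<and>
         (\<forall>P Q. common_perp A B C D P Q \<longrightarrow>
             M \<in> hline P Q \<and> cosh (hdist P Q) = sqrt 2 * cos \<epsilon> + 1) \<and>
         (\<exists>P Q. common_perp B C D A P Q) \<and>
         (\<forall>P Q. common_perp B C D A P Q \<longrightarrow>
             M \<in> hline P Q \<and> cosh (hdist P Q) = sqrt 2 * cos \<epsilon> + 1)"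
proof -
  obtain a b where "rhombus A B C D M a b"
    using rhombus_if_equilateral assms(3-6,11,12) by blast
  then interpret rhombus A B C D M a b .
  interpret rot: rhombus B C D A M b a
    by (rule rhombus_rotate)
  have "sqrt 2 * cos \<epsilon> = cos (hangle A D B) + cos (hangle B A C)"
    using assms(7,8) cos_quarter_pi_diff_add by simp
  also have "\<dots> = (((a * b)\<^sup>2 - 2 * b\<^sup>2 + 1) + ((a * b)\<^sup>2 - 2 * a\<^sup>2 + 1)) / ((a * b)\<^sup>2 - 1)"
    by (simp only: cos_hangle_A rot.cos_hangle_A mult.commute[of b a] add_divide_distrib)
  also have "\<dots> = 2 * ((a\<^sup>2 - 1) * (b\<^sup>2 - 1)) / ((a * b)\<^sup>2 - 1)"
    by (rule arg_cong[where f = "\<lambda>x. x / ((a * b)\<^sup>2 - 1)"]) (simp add: power_mult_distrib algebra_simps)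
  finally have cosh_eq: "1 + 2 * ((a\<^sup>2 - 1) * (b\<^sup>2 - 1) / ((a * b)\<^sup>2 - 1)) = sqrt 2 * cos \<epsilon> + 1"
    by simp
  show ?thesis
    using common_perp_exists common_perp_through_center cosh_common_perp rot.common_perp_exists
      rot.common_perp_through_center rot.cosh_common_perp cosh_eq by (simp add: mult.commute)
qed

end
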